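(* Let $t\in[n]$, let $S\subseteq N$ be $t$-switchable, let $a\in S$ and $b\in N$. Let $L\subseteq[t]$ be such that ${\rm s}(l,a,b)\in S$ for all $l\in L$. Then ${\rm s}(L,a,b)\in S$.
   Context: Fix positive integers $n, r_1,\dots,r_n$ and let $N=[r_1]\times\cdots\times[r_n]$. For $L\subseteq[n]$ and $a,b\in N$, ${\rm s}(L,a,b)\in N$ has $i$-th component $b_i$ if $i\in L$ and $a_i$ otherwise; ${\rm s}(l,a,b)={\rm s}(\{l\},a,b)$. Let $d(a,b)=\#\{j: a_j\neq b_j\}$. A subset $S\subseteq N$ is $t$-switchable if for all $a,b\in S$ with $d(a,b)=2$ and all $i\in[t]$, ${\rm s}(i,a,b)\in S$. *)

theory Defs
  imports "HOL-Library.FuncSet"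
begin

definition grid :: "nat \<Rightarrow> (nat \<Rightarrow> nat) \<Rightarrow> (nat \<Rightarrow> nat) set" where
  "grid n r = PiE {1..n} (\<lambda>i. {1..r i})"

definition sw :: "nat set \<Rightarrow> (nat \<Rightarrow> nat) \<Rightarrow> (nat \<Rightarrow> nat) \<Rightarrow> (nat \<Rightarrow> nat)" where
  "sw L a b = (\<lambda>i. if i \<in> L then b i else a i)"

definition hdist :: "nat \<Rightarrow> (nat \<Rightarrow> nat) \<Rightarrow> (nat \<Rightarrow> nat) \<Rightarrow> nat" where
  "hdist n a b = card {j \<in> {1..n}. a j \<noteq> b j}"

definition switchable :: "nat \<Rightarrow> (nat \<Rightarrow> nat) \<Rightarrow> nat \<Rightarrow> (nat \<Rightarrow> nat) set \<Rightarrow> bool" where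
  "switchable n r t S \<longleftrightarrow> S \<subseteq> grid n r \<and>
     (\<forall>a\<in>S. \<forall>b\<in>S. hdist n a b = 2 \<longrightarrow> (\<forall>i\<in>{1..t}. sw {i} a b \<in> S))"

end

theory Submission
  imports Defs
begin

text \<open>A coordinate \<open>l \<in> L\<close> with \<open>a l = b l\<close> can be dropped from \<open>L\<close>.
  Otherwise pick distinct \<open>l, k \<in> L\<close>: the points \<open>s(L - {l}, a, b)\<close> and \<open>s(L - {k}, a, b)\<close>
  lie in \<open>S\<close> by induction, differ exactly in the coordinates \<open>l\<close> and \<open>k\<close>, and switching
  coordinate \<open>l\<close> of the first to that of the second yields \<open>s(L, a, b)\<close>.\<close>

lemma sw_empty [simp]: "sw {} a b = a"
  by (simp add: sw_def)

lemma sw_remove_eq: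
  assumes "a l = b l"
  shows "sw (L - {l}) a b = sw L a b"
  using assms by (auto simp: sw_def fun_eq_iff)

lemma sw_singleton_sw_remove:
  assumes "l \<noteq> k" "l \<in> L" "k \<in> L"
  shows "sw {l} (sw (L - {l}) a b) (sw (L - {k}) a b) = sw L a b"
  using assms by (auto simp: sw_def fun_eq_iff)

lemma hdist_sw_remove:
  assumes "l \<noteq> k" "l \<in> L" "k \<in> L" "l \<in> {1..n}" "k \<in> {1..n}"
    and "a l \<noteq> b l" "a k \<noteq> b k"
  shows "hdist n (sw (L - {l}) a b) (sw (L - {k}) a b) = 2"
proof -
  have "{j \<in> {1..n}. sw (L - {l}) a b j \<noteq> sw (L - {k}) a b j} = {l, k}"
    using assms by (auto simp: sw_def)
  then show ?thesis
    using assms(1) by (simp add: hdist_def)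
qed

lemma sw_mem_of_sw_singletons_mem:
  assumes switch: "\<And>x y i. x \<in> S \<Longrightarrow> y \<in> S \<Longrightarrow> hdist n x y = 2 \<Longrightarrow> i \<in> I \<Longrightarrow> sw {i} x y \<in> S"
    and "I \<subseteq> {1..n}" "finite L" "L \<subseteq> I" "a \<in> S"
    and "\<forall>l\<in>L. sw {l} a b \<in> S"
  shows "sw L a b \<in> S"
  using assms(3-)
proof (induction L rule: finite_psubset_induct)
  case (psubset L)
  have IH: "sw (L - {l}) a b \<in> S" if "l \<in> L" for l
    using psubset that by (intro psubset.IH) auto
  show ?case
  proof (cases "\<exists>l\<in>L. a l = b l")
    case True
    then obtain l where "l \<in> L" "a l = b l" by blast
    then show ?thesis
      using IH sw_remove_eq by metis
  next
    case differ: False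
    show ?thesis
    proof (cases "\<exists>l k. l \<in> L \<and> k \<in> L \<and> l \<noteq> k")
      case True
      then obtain l k where lk: "l \<in> L" "k \<in> L" "l \<noteq> k" by blast
      have "hdist n (sw (L - {l}) a b) (sw (L - {k}) a b) = 2"
        using lk differ psubset.prems assms(2) by (intro hdist_sw_remove) auto
      then have "sw {l} (sw (L - {l}) a b) (sw (L - {k}) a b) \<in> S"
        using switch IH lk psubset.prems by blast
      then show ?thesis
        using sw_singleton_sw_remove[OF lk(3,1,2)] by simp
    next
      case False
      then have "L = {} \<or> (\<exists>l. L = {l})" by blast
      then show ?thesis
        using psubset.prems by auto
    qed
  qed
qed

theorem lemma3p2:
  fixes n t :: nat and r :: "nat \<Rightarrow> nat" and S :: "(nat \<Rightarrow> nat) set"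
    and a b :: "nat \<Rightarrow> nat" and L :: "nat set"
  assumes "\<forall>i\<in>{1..n}. r i \<ge> 1"
    and "t \<in> {1..n}"
    and "switchable n r t S"
    and "a \<in> S" and "b \<in> grid n r"
    and "L \<subseteq> {1..t}"
    and "\<forall>l\<in>L. sw {l} a b \<in> S"
  shows "sw L a b \<in> S"
proof (rule sw_mem_of_sw_singletons_mem)
  show "\<And>x y i. x \<in> S \<Longrightarrow> y \<in> S \<Longrightarrow> hdist n x y = 2 \<Longrightarrow> i \<in> {1..t} \<Longrightarrow> sw {i} x y \<in> S"
    using assms(3) unfolding switchable_def by blast
  show "{1..t} \<subseteq> {1..n}"
    using assms(2) by auto
  show "finite L"
    using assms(6) finite_subset by blast
qed (use assms in auto)

end
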